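(* Let $N=\{1,\dots,n\}$, $\eta>0$, $B\ge1$ an integer. Let $(A(k))_{k\ge0}$ be $n\times n$ matrices, $x(0)\in\mathbb{R}^n$, and $x(k+1)=A(k)x(k)$. Assume: (i) each $A(k)$ is doubly stochastic with positive diagonal entries and all positive entries at least $\eta$; (ii) for every integer $k\ge0$, every permutation $\sigma$ of $N$ with $x_{\sigma(1)}(kB)\ge\cdots\ge x_{\sigma(n)}(kB)$, and every $d\in\{1,\dots,n-1\}$, either $x_{\sigma(d)}(kB)=x_{\sigma(d+1)}(kB)$, or there exist $t\in\{kB,\dots,(k+1)B-1\}$, $i\in\{\sigma(1),\dots,\sigma(d)\}$, $j\in\{\sigma(d+1),\dots,\sigma(n)\}$ with $(i,j)$ or $(j,i)$ in $\mathcal{E}(A(t))$. Then for every integer $k\ge0$ and every permutation $\sigma$ of $N$ with $x_{\sigma(1)}(kB)\ge\cdots\ge x_{\sigma(n)}(kB)$, \[V(x(kB))-V(x((k+1)B))\ge\frac\eta2\sum_{i=1}^{n-1}\big(x_{\sigma(i)}(kB)-x_{\sigma(i+1)}(kB)\big)^2.\]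
   Context: A matrix is doubly stochastic if it is nonnegative with all row and column sums equal to $1$. For a matrix $A=[a_{ij}]$, $\mathcal{E}(A)$ is the set of directed edges $(j,i)$ (including self-edges) with $a_{ij}>0$. For $x\in\mathbb{R}^n$, $\bar x=\frac1n\sum_ix_i$ and $V(x)=\sum_i(x_i-\bar x)^2$. *)

theory Defs
  imports Complex_Main "HOL-Combinatorics.Permutations"
begin

text \<open>Vectors in R^n are functions nat => real indexed by {1..n};
  n x n matrices are functions nat => nat => real, entry (i,j) is M i j.\<close>

definition doubly_stochastic :: "nat \<Rightarrow> (nat \<Rightarrow> nat \<Rightarrow> real) \<Rightarrow> bool" where
  "doubly_stochastic n M \<longleftrightarrow>
     (\<forall>i\<in>{1..n}. \<forall>j\<in>{1..n}. M i j \<ge> 0) \<and>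
     (\<forall>i\<in>{1..n}. (\<Sum>j=1..n. M i j) = 1) \<and>
     (\<forall>j\<in>{1..n}. (\<Sum>i=1..n. M i j) = 1)"

definition edges :: "nat \<Rightarrow> (nat \<Rightarrow> nat \<Rightarrow> real) \<Rightarrow> (nat \<times> nat) set" where
  "edges n M = {(j, i). i \<in> {1..n} \<and> j \<in> {1..n} \<and> M i j > 0}"

definition avg :: "nat \<Rightarrow> (nat \<Rightarrow> real) \<Rightarrow> real" where
  "avg n x = (\<Sum>i=1..n. x i) / real n"

definition Vfun :: "nat \<Rightarrow> (nat \<Rightarrow> real) \<Rightarrow> real" where
  "Vfun n x = (\<Sum>i=1..n. (x i - avg n x)^2)"

end

theory Submission
  imports Defs
begin

text \<open>A doubly stochastic step lowers V by the sum over rows l of the spread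
  sum_i a_li (x_i - x'_l)^2 of the old values around the new value of l. For a nonzero gap between
  the d-th and (d+1)-st largest values at time kB, look at the first time in the window at which an
  edge crosses the cut between the d largest nodes and the others. Until then neither side has mixed
  with the other, so the upper side still lies above the gap and the lower side below it; the edge
  then yields a row with two entries at least \<eta> on values straddling the gap, whose spread is at
  least \<eta>/2 times the squared gap. Gaps charged to the same row and time lie between the first and
  the last of them, and squares of nonnegative gaps sum to at most the square of their total, so
  each row at each time pays at most once.\<close>

lemma sum_power2_le_power2_sum:
  fixes f :: "'a \<Rightarrow> real"
  assumes "\<And>d. d \<in> F \<Longrightarrow> 0 \<le> f d"
  shows "(\<Sum>d\<in>F. (f d)^2) \<le> (\<Sum>d\<in>F. f d)^2"
  using assms
proof (induction F rule: infinite_finite_induct)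
  case (insert a F)
  have "0 \<le> 2 * f a * (\<Sum>d\<in>F. f d)"
    using insert.prems by (simp add: sum_nonneg)
  then show ?case
    using insert by (simp add: power2_sum)
qed simp_all

lemma sum_power2_gaps_le_power2_span:
  fixes z :: "nat \<Rightarrow> real"
  assumes antimono: "\<And>d. d \<in> {1..<n} \<Longrightarrow> z (Suc d) \<le> z d"
    and "F \<subseteq> {d1..d2}" "d1 \<le> d2" "{d1..d2} \<subseteq> {1..<n}"
  shows "(\<Sum>d\<in>F. (z d - z (Suc d))^2) \<le> (z d1 - z (Suc d2))^2"
proof -
  have "(\<Sum>d\<in>F. (z d - z (Suc d))^2) \<le> (\<Sum>d=d1..d2. (z d - z (Suc d))^2)"
    using assms(2) by (intro sum_mono2) auto
  also have "\<dots> \<le> (\<Sum>d=d1..d2. z d - z (Suc d))^2"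
    using assms(4) antimono by (intro sum_power2_le_power2_sum) auto
  also have "(\<Sum>d=d1..d2. z d - z (Suc d)) = z d1 - z (Suc d2)"
    using assms(3) sum_Suc_diff[of d1 d2 "\<lambda>d. - z d"] by simp
  finally show ?thesis .
qed

lemma sum_power2_gaps_le_by_groups:
  fixes z P Q :: "nat \<Rightarrow> real" and g :: "nat \<Rightarrow> 'a" and c :: "'a \<Rightarrow> real"
  assumes antimono: "\<And>d. d \<in> {1..<n} \<Longrightarrow> z (Suc d) \<le> z d"
    and D: "D \<subseteq> {1..<n}" and \<Omega>: "finite \<Omega>" "g ` D \<subseteq> \<Omega>"
    and c_nonneg: "\<And>\<omega>. \<omega> \<in> \<Omega> \<Longrightarrow> 0 \<le> c \<omega>" and "0 \<le> a"
    and witness: "\<And>d. d \<in> D \<Longrightarrow> z d \<le> P d \<and> Q d \<le> z (Suc d)"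
    and group: "\<And>d d'. d \<in> D \<Longrightarrow> d' \<in> D \<Longrightarrow> g d = g d' \<Longrightarrow> a * (P d - Q d')^2 \<le> c (g d)"
  shows "a * (\<Sum>d\<in>D. (z d - z (Suc d))^2) \<le> (\<Sum>\<omega>\<in>\<Omega>. c \<omega>)"
proof -
  have finite_D: "finite D"
    using D finite_subset by blast
  have fiber: "a * (\<Sum>d\<in>{d\<in>D. g d = \<omega>}. (z d - z (Suc d))^2) \<le> c \<omega>" if "\<omega> \<in> g ` D" for \<omega>
  proof -
    define F where "F = {d\<in>D. g d = \<omega>}"
    have "finite F" "F \<noteq> {}"
      using finite_D that unfolding F_def by auto
    define d1 where "d1 = Min F"
    define d2 where "d2 = Max F"
    have d1: "d1 \<in> F" and d2: "d2 \<in> F" and F_sub: "F \<subseteq> {d1..d2}"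
      using \<open>finite F\<close> \<open>F \<noteq> {}\<close> unfolding d1_def d2_def by auto
    have "d1 \<le> d2" "d1 \<in> {1..<n}" "d2 \<in> {1..<n}"
      using d1 d2 D F_sub unfolding F_def by auto
    moreover from this have span: "{d1..d2} \<subseteq> {1..<n}"
      by auto
    ultimately have "0 \<le> z d1 - z (Suc d2)"
      using lift_Suc_antimono_le_ivl[of "{1..<n}" z d1 "Suc d2"] antimono by auto
    then have "(z d1 - z (Suc d2))^2 \<le> (P d1 - Q d2)^2"
      using witness[of d1] witness[of d2] d1 d2 unfolding F_def by (intro power_mono) auto
    with sum_power2_gaps_le_power2_span[where z=z, OF antimono F_sub \<open>d1 \<le> d2\<close> span]
    have "a * (\<Sum>d\<in>F. (z d - z (Suc d))^2) \<le> a * (P d1 - Q d2)^2"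
      using \<open>0 \<le> a\<close> by (intro mult_left_mono) auto
    also have "\<dots> \<le> c \<omega>"
      using group[of d1 d2] d1 d2 unfolding F_def by auto
    finally show ?thesis
      unfolding F_def .
  qed
  have "a * (\<Sum>d\<in>D. (z d - z (Suc d))^2)
      = (\<Sum>\<omega>\<in>g ` D. a * (\<Sum>d\<in>{d\<in>D. g d = \<omega>}. (z d - z (Suc d))^2))"
    by (simp add: sum.group[OF finite_D finite_imageI[OF finite_D] subset_refl] sum_distrib_left)
  also have "\<dots> \<le> (\<Sum>\<omega>\<in>g ` D. c \<omega>)"
    by (rule sum_mono) (rule fiber)
  also have "\<dots> \<le> (\<Sum>\<omega>\<in>\<Omega>. c \<omega>)"
    using \<Omega> c_nonneg by (intro sum_mono2) auto
  finally show ?thesis .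
qed

lemma weighted_spread_ge:
  fixes w y :: "'a \<Rightarrow> real"
  assumes "finite I" "\<And>i. i \<in> I \<Longrightarrow> 0 \<le> w i"
    and "p \<in> I" "q \<in> I" "\<eta> \<le> w p" "\<eta> \<le> w q" "0 \<le> \<eta>"
  shows "\<eta> / 2 * (y p - y q)^2 \<le> (\<Sum>i\<in>I. w i * (y i - m)^2)"
proof (cases "p = q")
  case True
  then show ?thesis
    using assms(2) by (simp add: sum_nonneg)
next
  case False
  have "\<eta> / 2 * (y p - y q)^2 \<le> \<eta> / 2 * (y p - y q)^2 + \<eta> / 2 * (y p + y q - 2 * m)^2"
    using \<open>0 \<le> \<eta>\<close> by simp
  also have "\<dots> = \<eta> * (y p - m)^2 + \<eta> * (y q - m)^2"
    by (simp add: power2_eq_square field_simps)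
  also have "\<dots> \<le> w p * (y p - m)^2 + w q * (y q - m)^2"
    using assms(5,6) by (intro add_mono mult_right_mono) simp_all
  also have "\<dots> = (\<Sum>i\<in>{p, q}. w i * (y i - m)^2)"
    using False by simp
  also have "\<dots> \<le> (\<Sum>i\<in>I. w i * (y i - m)^2)"
    using assms(1-4) by (intro sum_mono2) simp_all
  finally show ?thesis .
qed

lemma convex_combination_ge:
  fixes w y :: "'a \<Rightarrow> real"
  assumes "(\<Sum>j\<in>I. w j) = 1" "\<And>j. j \<in> I \<Longrightarrow> 0 \<le> w j"
    and "\<And>j. j \<in> I \<Longrightarrow> w j \<noteq> 0 \<Longrightarrow> c \<le> y j"
  shows "c \<le> (\<Sum>j\<in>I. w j * y j)"
proof -
  have "(\<Sum>j\<in>I. w j * c) \<le> (\<Sum>j\<in>I. w j * y j)"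
    using assms(2,3) by (intro sum_mono) (metis mult_left_mono mult_zero_left order_refl)
  then show ?thesis
    using assms(1) by (simp add: sum_distrib_right[symmetric])
qed

lemma convex_combination_le:
  fixes w y :: "'a \<Rightarrow> real"
  assumes "(\<Sum>j\<in>I. w j) = 1" "\<And>j. j \<in> I \<Longrightarrow> 0 \<le> w j"
    and "\<And>j. j \<in> I \<Longrightarrow> w j \<noteq> 0 \<Longrightarrow> y j \<le> c"
  shows "(\<Sum>j\<in>I. w j * y j) \<le> c"
  using convex_combination_ge[of w I "-c" "\<lambda>j. - y j"] assms by (simp add: sum_negf)

lemma Vfun_eq_sum_power2_minus:
  "Vfun n y = (\<Sum>i=1..n. (y i)^2) - (\<Sum>i=1..n. y i)^2 / real n"
proof (cases "n = 0")
  case True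
  then show ?thesis by (simp add: Vfun_def)
next
  case False
  define S where "S = (\<Sum>i=1..n. y i)"
  have "Vfun n y = (\<Sum>i=1..n. (y i)^2 - 2 * (S / n) * y i + (S / n)^2)"
    unfolding Vfun_def avg_def S_def[symmetric] by (intro sum.cong) (auto simp: power2_diff)
  also have "\<dots> = (\<Sum>i=1..n. (y i)^2) - 2 * (S / n) * (\<Sum>i=1..n. y i) + n * (S / n)^2"
    by (simp only: sum.distrib sum_subtractf sum_distrib_left) simp
  also have "\<dots> = (\<Sum>i=1..n. (y i)^2) - S^2 / n"
    using False unfolding S_def by (simp add: field_simps power2_eq_square)
  finally show ?thesis by (simp add: S_def)
qed

lemma Vfun_diff_doubly_stochastic:
  assumes ds: "doubly_stochastic n M"
    and y': "\<And>l. l \<in> {1..n} \<Longrightarrow> y' l = (\<Sum>j=1..n. M l j * y j)"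
  shows "Vfun n y - Vfun n y' = (\<Sum>l=1..n. \<Sum>i=1..n. M l i * (y i - y' l)^2)"
proof -
  have col: "\<And>j. j \<in> {1..n} \<Longrightarrow> (\<Sum>l=1..n. M l j) = 1"
    and row: "\<And>l. l \<in> {1..n} \<Longrightarrow> (\<Sum>i=1..n. M l i) = 1"
    using ds unfolding doubly_stochastic_def by auto
  have col_sum: "(\<Sum>l=1..n. M l j * f j) = f j" if "j \<in> {1..n}" for j and f :: "nat \<Rightarrow> real"
    using col[OF that] by (simp add: sum_distrib_right[symmetric])
  have mean: "(\<Sum>l=1..n. y' l) = (\<Sum>j=1..n. y j)"
  proof -
    have "(\<Sum>l=1..n. y' l) = (\<Sum>l=1..n. \<Sum>j=1..n. M l j * y j)"
      using y' by simp
    also have "\<dots> = (\<Sum>j=1..n. \<Sum>l=1..n. M l j * y j)"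
      by (rule sum.swap)
    also have "\<dots> = (\<Sum>j=1..n. y j)"
      by (rule sum.cong[OF refl], rule col_sum)
    finally show ?thesis .
  qed
  have row_spread: "(\<Sum>i=1..n. M l i * (y i - y' l)^2) = (\<Sum>i=1..n. M l i * (y i)^2) - (y' l)^2"
    if l: "l \<in> {1..n}" for l
  proof -
    have "(\<Sum>i=1..n. M l i * (y i - y' l)^2)
        = (\<Sum>i=1..n. M l i * (y i)^2) - 2 * y' l * (\<Sum>i=1..n. M l i * y i) + (y' l)^2 * (\<Sum>i=1..n. M l i)"
      by (simp add: power2_diff algebra_simps sum.distrib sum_subtractf sum_distrib_left)
    then show ?thesis
      unfolding row[OF l] y'[OF l, symmetric] by (simp add: power2_eq_square)
  qed
  have second_moment: "(\<Sum>l=1..n. \<Sum>i=1..n. M l i * (y i)^2) = (\<Sum>i=1..n. (y i)^2)"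
    by (subst sum.swap) (rule sum.cong[OF refl], rule col_sum)
  have "(\<Sum>l=1..n. \<Sum>i=1..n. M l i * (y i - y' l)^2)
      = (\<Sum>l=1..n. (\<Sum>i=1..n. M l i * (y i)^2) - (y' l)^2)"
    by (rule sum.cong[OF refl], rule row_spread)
  also have "\<dots> = (\<Sum>i=1..n. (y i)^2) - (\<Sum>l=1..n. (y' l)^2)"
    by (simp only: sum_subtractf second_moment)
  finally have "(\<Sum>l=1..n. \<Sum>i=1..n. M l i * (y i - y' l)^2)
      = (\<Sum>i=1..n. (y i)^2) - (\<Sum>l=1..n. (y' l)^2)" .
  then show ?thesis
    unfolding Vfun_eq_sum_power2_minus mean by simp
qed

lemma Vfun_diff_window:
  fixes A :: "nat \<Rightarrow> nat \<Rightarrow> nat \<Rightarrow> real" and x :: "nat \<Rightarrow> nat \<Rightarrow> real"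
  assumes dyn: "\<And>k i. i \<in> {1..n} \<Longrightarrow> x (Suc k) i = (\<Sum>j=1..n. A k i j * x k j)"
    and ds: "\<And>k. doubly_stochastic n (A k)"
  shows "Vfun n (x s) - Vfun n (x (s + m))
    = (\<Sum>(t, l)\<in>{s..<s+m} \<times> {1..n}. \<Sum>i=1..n. A t l i * (x t i - x (Suc t) l)^2)"
proof -
  have "Vfun n (x s) - Vfun n (x (s + m)) = (\<Sum>t=s..<s+m. Vfun n (x t) - Vfun n (x (Suc t)))"
    using sum_Suc_diff'[of s "s + m" "\<lambda>t. Vfun n (x t)"] by (simp add: sum_subtractf)
  also have "\<dots> = (\<Sum>t=s..<s+m. \<Sum>l=1..n. \<Sum>i=1..n. A t l i * (x t i - x (Suc t) l)^2)"
    by (intro sum.cong refl Vfun_diff_doubly_stochastic[OF ds] dyn)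
  also have "\<dots> = (\<Sum>(t, l)\<in>{s..<s+m} \<times> {1..n}. \<Sum>i=1..n. A t l i * (x t i - x (Suc t) l)^2)"
    by (rule sum.cartesian_product)
  finally show ?thesis .
qed

definition connects :: "nat \<Rightarrow> (nat \<Rightarrow> nat \<Rightarrow> real) \<Rightarrow> nat set \<Rightarrow> nat set \<Rightarrow> bool" where
  "connects n M S T \<longleftrightarrow> (\<exists>i\<in>S. \<exists>j\<in>T. (i, j) \<in> edges n M \<or> (j, i) \<in> edges n M)"

lemma averaging_preserves_bounds_without_crossing:
  assumes ds: "doubly_stochastic n M"
    and y': "\<And>l. l \<in> {1..n} \<Longrightarrow> y' l = (\<Sum>j=1..n. M l j * y j)"
    and cover: "S \<union> T = {1..n}" and no_cross: "\<not> connects n M S T"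
    and upper: "\<forall>i\<in>S. a \<le> y i" and lower: "\<forall>i\<in>T. y i \<le> b"
  shows "(\<forall>i\<in>S. a \<le> y' i) \<and> (\<forall>i\<in>T. y' i \<le> b)"
proof -
  have nonneg: "\<And>i j. i \<in> {1..n} \<Longrightarrow> j \<in> {1..n} \<Longrightarrow> 0 \<le> M i j"
    and row: "\<And>i. i \<in> {1..n} \<Longrightarrow> (\<Sum>j=1..n. M i j) = 1"
    using ds unfolding doubly_stochastic_def by auto
  have support: "j \<in> U" if "U \<in> {S, T}" "i \<in> U" "j \<in> {1..n}" "M i j \<noteq> 0" for U i j
  proof (rule ccontr)
    assume "j \<notin> U"
    have "i \<in> {1..n}"
      using that cover by blast
    then have "(j, i) \<in> edges n M"
      using that nonneg[of i j] unfolding edges_def by (simp add: less_le)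
    then show False
      using that \<open>j \<notin> U\<close> cover no_cross unfolding connects_def by blast
  qed
  show ?thesis
  proof (intro conjI ballI)
    fix i assume "i \<in> S"
    then have i: "i \<in> {1..n}"
      using cover by blast
    show "a \<le> y' i"
      unfolding y'[OF i]
      by (rule convex_combination_ge) (use \<open>i \<in> S\<close> i row upper support[of S i] nonneg in auto)
  next
    fix i assume "i \<in> T"
    then have i: "i \<in> {1..n}"
      using cover by blast
    show "y' i \<le> b"
      unfolding y'[OF i]
      by (rule convex_combination_le) (use \<open>i \<in> T\<close> i row lower support[of T i] nonneg in auto)
  qed
qed

lemma heavy_row_of_crossing_edge:
  assumes diag: "\<And>i. i \<in> {1..n} \<Longrightarrow> M i i > 0"
    and lowb: "\<And>i j. i \<in> {1..n} \<Longrightarrow> j \<in> {1..n} \<Longrightarrow> M i j > 0 \<Longrightarrow> M i j \<ge> \<eta>"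
    and cross: "connects n M S T"
    and upper: "\<forall>i\<in>S. a \<le> y i" and lower: "\<forall>i\<in>T. y i \<le> b"
  shows "\<exists>l\<in>{1..n}. \<exists>p\<in>{1..n}. \<exists>q\<in>{1..n}. \<eta> \<le> M l p \<and> \<eta> \<le> M l q \<and> a \<le> y p \<and> y q \<le> b"
proof -
  obtain i j where ij: "i \<in> S" "j \<in> T" "i \<in> {1..n}" "j \<in> {1..n}" "M j i > 0 \<or> M i j > 0"
    using cross unfolding connects_def edges_def by blast
  then show ?thesis
    using upper lower lowb[of j i] lowb[of i j] lowb[OF _ _ diag, of i] lowb[OF _ _ diag, of j]
    by blast
qed

lemma heavy_row_across_cut:
  fixes A :: "nat \<Rightarrow> nat \<Rightarrow> nat \<Rightarrow> real" and x :: "nat \<Rightarrow> nat \<Rightarrow> real"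
  assumes dyn: "\<And>k i. i \<in> {1..n} \<Longrightarrow> x (Suc k) i = (\<Sum>j=1..n. A k i j * x k j)"
    and ds: "\<And>k. doubly_stochastic n (A k)"
    and diag: "\<And>k i. i \<in> {1..n} \<Longrightarrow> A k i i > 0"
    and lowb: "\<And>k i j. i \<in> {1..n} \<Longrightarrow> j \<in> {1..n} \<Longrightarrow> A k i j > 0 \<Longrightarrow> A k i j \<ge> \<eta>"
    and cover: "S \<union> T = {1..n}"
    and upper: "\<forall>i\<in>S. a \<le> x s i" and lower: "\<forall>i\<in>T. x s i \<le> b"
    and cross: "connects n (A (s + m)) S T"
  shows "\<exists>t\<in>{s..s+m}. \<exists>l\<in>{1..n}. \<exists>p\<in>{1..n}. \<exists>q\<in>{1..n}.
           \<eta> \<le> A t l p \<and> \<eta> \<le> A t l q \<and> a \<le> x t p \<and> x t q \<le> b"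
  using upper lower cross
proof (induction m arbitrary: s)
  case 0
  then show ?case
    using heavy_row_of_crossing_edge[of n "A s", OF diag lowb] by fastforce
next
  case (Suc m)
  show ?case
  proof (cases "connects n (A s) S T")
    case True
    then show ?thesis
      using Suc.prems heavy_row_of_crossing_edge[of n "A s", OF diag lowb] by fastforce
  next
    case False
    then have "(\<forall>i\<in>S. a \<le> x (Suc s) i) \<and> (\<forall>i\<in>T. x (Suc s) i \<le> b)"
      using Suc.prems by (intro averaging_preserves_bounds_without_crossing[OF ds dyn cover])
    then show ?thesis
      using Suc.IH[of "Suc s"] Suc.prems(3) by fastforce
  qed
qed

lemma heavy_row_across_sorted_gap:
  fixes A :: "nat \<Rightarrow> nat \<Rightarrow> nat \<Rightarrow> real" and x :: "nat \<Rightarrow> nat \<Rightarrow> real"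
  assumes dyn: "\<And>k i. i \<in> {1..n} \<Longrightarrow> x (Suc k) i = (\<Sum>j=1..n. A k i j * x k j)"
    and ds: "\<And>k. doubly_stochastic n (A k)"
    and diag: "\<And>k i. i \<in> {1..n} \<Longrightarrow> A k i i > 0"
    and lowb: "\<And>k i j. i \<in> {1..n} \<Longrightarrow> j \<in> {1..n} \<Longrightarrow> A k i j > 0 \<Longrightarrow> A k i j \<ge> \<eta>"
    and perm: "\<sigma> permutes {1..n}"
    and sorted: "\<forall>a\<in>{1..<n}. x s (\<sigma> a) \<ge> x s (\<sigma> (Suc a))"
    and d: "d \<in> {1..<n}"
    and cross: "s \<le> t" "connects n (A t) (\<sigma> ` {1..d}) (\<sigma> ` {d+1..n})"
  shows "\<exists>t'\<in>{s..t}. \<exists>l\<in>{1..n}. \<exists>p\<in>{1..n}. \<exists>q\<in>{1..n}.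
           \<eta> \<le> A t' l p \<and> \<eta> \<le> A t' l q \<and> x s (\<sigma> d) \<le> x t' p \<and> x t' q \<le> x s (\<sigma> (Suc d))"
proof -
  have "{1..d} \<union> {d+1..n} = {1..n}"
    using d by auto
  then have cover: "\<sigma> ` {1..d} \<union> \<sigma> ` {d+1..n} = {1..n}"
    by (metis image_Un permutes_image[OF perm])
  have antimono: "x s (\<sigma> b) \<le> x s (\<sigma> a)" if "1 \<le> a" "a \<le> b" "b \<le> n" for a b
    using lift_Suc_antimono_le_ivl[of "{1..<n}" "\<lambda>a. x s (\<sigma> a)" a b] sorted that by auto
  have "\<forall>i\<in>\<sigma> ` {1..d}. x s (\<sigma> d) \<le> x s i" "\<forall>i\<in>\<sigma> ` {d+1..n}. x s i \<le> x s (\<sigma> (Suc d))"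
    using antimono d by auto
  from heavy_row_across_cut[OF dyn ds diag lowb cover this, of "t - s"] show ?thesis
    using cross by simp
qed

lemma Vfun_diff_window_ge_gaps:
  fixes A :: "nat \<Rightarrow> nat \<Rightarrow> nat \<Rightarrow> real" and x :: "nat \<Rightarrow> nat \<Rightarrow> real" and z :: "nat \<Rightarrow> real"
  assumes dyn: "\<And>k i. i \<in> {1..n} \<Longrightarrow> x (Suc k) i = (\<Sum>j=1..n. A k i j * x k j)"
    and ds: "\<And>k. doubly_stochastic n (A k)" and "0 \<le> \<eta>"
    and antimono: "\<And>d. d \<in> {1..<n} \<Longrightarrow> z (Suc d) \<le> z d" and D: "D \<subseteq> {1..<n}"
    and witness: "\<forall>d\<in>D. \<exists>t\<in>{s..<s+m}. \<exists>l\<in>{1..n}. \<exists>p\<in>{1..n}. \<exists>q\<in>{1..n}.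
      \<eta> \<le> A t l p \<and> \<eta> \<le> A t l q \<and> z d \<le> x t p \<and> x t q \<le> z (Suc d)"
  shows "\<eta> / 2 * (\<Sum>d\<in>D. (z d - z (Suc d))^2) \<le> Vfun n (x s) - Vfun n (x (s + m))"
proof -
  obtain T L P Q where TLPQ: "\<And>d. d \<in> D \<Longrightarrow> T d \<in> {s..<s+m} \<and> L d \<in> {1..n} \<and>
      P d \<in> {1..n} \<and> Q d \<in> {1..n} \<and> \<eta> \<le> A (T d) (L d) (P d) \<and> \<eta> \<le> A (T d) (L d) (Q d) \<and>
      z d \<le> x (T d) (P d) \<and> x (T d) (Q d) \<le> z (Suc d)"
    using witness by metis
  have nonneg: "\<And>t l i. l \<in> {1..n} \<Longrightarrow> i \<in> {1..n} \<Longrightarrow> 0 \<le> A t l i"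
    using ds unfolding doubly_stochastic_def by blast
  have window: "Vfun n (x s) - Vfun n (x (s + m))
      = (\<Sum>(t, l)\<in>{s..<s+m} \<times> {1..n}. \<Sum>i=1..n. A t l i * (x t i - x (Suc t) l)^2)"
    by (rule Vfun_diff_window[where A=A and x=x, OF dyn ds])
  show ?thesis
    unfolding window
  proof (rule sum_power2_gaps_le_by_groups[where z=z and g="\<lambda>d. (T d, L d)"
        and P="\<lambda>d. x (T d) (P d)" and Q="\<lambda>d. x (T d) (Q d)", OF antimono D])
    show "(\<lambda>d. (T d, L d)) ` D \<subseteq> {s..<s+m} \<times> {1..n}"
      using TLPQ by blast
    show "\<And>d. d \<in> D \<Longrightarrow> z d \<le> x (T d) (P d) \<and> x (T d) (Q d) \<le> z (Suc d)"
      using TLPQ by blast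
    show "\<eta> / 2 * (x (T d) (P d) - x (T d') (Q d'))^2
        \<le> (case (T d, L d) of (t, l) \<Rightarrow> \<Sum>i=1..n. A t l i * (x t i - x (Suc t) l)^2)"
      if "d \<in> D" "d' \<in> D" "(T d, L d) = (T d', L d')" for d d'
      using weighted_spread_ge[of "{1..n}" "A (T d) (L d)" "P d" "Q d'" \<eta> "x (T d)" "x (Suc (T d)) (L d)"]
        that TLPQ[of d] TLPQ[of d'] nonneg \<open>0 \<le> \<eta>\<close> by simp
  qed (use nonneg \<open>0 \<le> \<eta>\<close> in \<open>auto intro!: sum_nonneg\<close>)
qed

theorem lemma4:
  fixes n B :: nat and \<eta> :: real
    and A :: "nat \<Rightarrow> nat \<Rightarrow> nat \<Rightarrow> real"
    and x :: "nat \<Rightarrow> nat \<Rightarrow> real"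
  assumes eta_pos: "\<eta> > 0"
    and B_ge: "B \<ge> 1"
    and dyn: "\<And>k i. i \<in> {1..n} \<Longrightarrow> x (Suc k) i = (\<Sum>j=1..n. A k i j * x k j)"
    and ds: "\<And>k. doubly_stochastic n (A k)"
    and diag: "\<And>k i. i \<in> {1..n} \<Longrightarrow> A k i i > 0"
    and lowb: "\<And>k i j. i \<in> {1..n} \<Longrightarrow> j \<in> {1..n} \<Longrightarrow> A k i j > 0 \<Longrightarrow> A k i j \<ge> \<eta>"
    and conn: "\<And>k \<sigma> d. \<sigma> permutes {1..n} \<Longrightarrow>
        (\<forall>a\<in>{1..<n}. x (k*B) (\<sigma> a) \<ge> x (k*B) (\<sigma> (Suc a))) \<Longrightarrow>
        d \<in> {1..n-1} \<Longrightarrow>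
        x (k*B) (\<sigma> d) = x (k*B) (\<sigma> (Suc d)) \<or>
        (\<exists>t\<in>{k*B..(k+1)*B-1}. \<exists>i\<in>\<sigma> ` {1..d}. \<exists>j\<in>\<sigma> ` {d+1..n}.
            (i, j) \<in> edges n (A t) \<or> (j, i) \<in> edges n (A t))"
  shows "\<And>k \<sigma>. \<sigma> permutes {1..n} \<Longrightarrow>
        (\<forall>a\<in>{1..<n}. x (k*B) (\<sigma> a) \<ge> x (k*B) (\<sigma> (Suc a))) \<Longrightarrow>
        Vfun n (x (k*B)) - Vfun n (x ((k+1)*B))
          \<ge> \<eta> / 2 * (\<Sum>i=1..n-1. (x (k*B) (\<sigma> i) - x (k*B) (\<sigma> (Suc i)))^2)"
proof -
  fix k \<sigma>
  assume perm: "\<sigma> permutes {1..n}"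
    and sorted: "\<forall>a\<in>{1..<n}. x (k*B) (\<sigma> a) \<ge> x (k*B) (\<sigma> (Suc a))"
  define z where "z d = x (k*B) (\<sigma> d)" for d
  define D where "D = {d\<in>{1..<n}. z d \<noteq> z (Suc d)}"
  have "\<forall>d\<in>D. \<exists>t\<in>{k*B..<k*B+B}. \<exists>l\<in>{1..n}. \<exists>p\<in>{1..n}. \<exists>q\<in>{1..n}.
      \<eta> \<le> A t l p \<and> \<eta> \<le> A t l q \<and> z d \<le> x t p \<and> x t q \<le> z (Suc d)"
  proof
    fix d assume "d \<in> D"
    then have d: "d \<in> {1..<n}" "z d \<noteq> z (Suc d)"
      unfolding D_def by auto
    moreover have "d \<in> {1..n-1}"
      using d by auto
    ultimately obtain t where t: "t \<in> {k*B..(k+1)*B-1}"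
      and cross: "connects n (A t) (\<sigma> ` {1..d}) (\<sigma> ` {d+1..n})"
      using conn[OF perm sorted] unfolding connects_def z_def by blast
    show "\<exists>t\<in>{k*B..<k*B+B}. \<exists>l\<in>{1..n}. \<exists>p\<in>{1..n}. \<exists>q\<in>{1..n}.
        \<eta> \<le> A t l p \<and> \<eta> \<le> A t l q \<and> z d \<le> x t p \<and> x t q \<le> z (Suc d)"
      using heavy_row_across_sorted_gap[OF dyn ds diag lowb perm sorted d(1) _ cross] t B_ge
      unfolding z_def by force
  qed
  then have "\<eta> / 2 * (\<Sum>d\<in>D. (z d - z (Suc d))^2) \<le> Vfun n (x (k*B)) - Vfun n (x (k*B + B))"
    using sorted eta_pos
    by (intro Vfun_diff_window_ge_gaps[where A=A and x=x, OF dyn ds]) (auto simp: z_def D_def)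
  moreover have "(\<Sum>i=1..n-1. (z i - z (Suc i))^2) = (\<Sum>d\<in>D. (z d - z (Suc d))^2)"
    unfolding D_def by (intro sum.mono_neutral_right) auto
  ultimately show "Vfun n (x (k*B)) - Vfun n (x ((k+1)*B))
      \<ge> \<eta> / 2 * (\<Sum>i=1..n-1. (x (k*B) (\<sigma> i) - x (k*B) (\<sigma> (Suc i)))^2)"
    by (simp add: z_def add.commute)
qed

end
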